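(* Let $g$ be a locally Lipschitz function on $\mathbb{R}$ and suppose there is a separately convex function $h$ on $\mathbb{R}^2$ such that $g(t)=h(t,t)$ for every $t\in\mathbb{R}$. Then $$h(x+u,x-u)+h(x-u,x+u)-2h(x,x)\ge -u\cdot\liminf_{v\to0+}\int_v^u\frac{\omega_g(x,t)}{t^2}\,dt$$ for every $x,u\in\mathbb{R}$ with $u>0$. In particular, for every bounded interval $I\subset\mathbb{R}$ there is a constant $C(g,I)$ such that $$-\liminf_{b\to0+}\int_b^1\frac{\omega_g(x,t)}{t^2}\,dt<C(g,I)$$ for every $x\in I$.
   Context: A function $h:\mathbb{R}^2\to\mathbb{R}$ is called separately convex if it is convex on every line parallel to a coordinate axis. For a real function $g$ on $\mathbb{R}$, $\omega_g(x,t):=g(x+t)+g(x-t)-2g(x)$ is its second order central difference at $x$. *)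

theory Defs
  imports "HOL-Analysis.Analysis"
begin

definition locally_lipschitz_real :: "(real \<Rightarrow> real) \<Rightarrow> bool" where
  "locally_lipschitz_real g \<longleftrightarrow>
     (\<forall>x. \<exists>e>0. \<exists>L. \<forall>y\<in>ball x e. \<forall>z\<in>ball x e. \<bar>g y - g z\<bar> \<le> L * \<bar>y - z\<bar>)"

definition separately_convex :: "(real \<Rightarrow> real \<Rightarrow> real) \<Rightarrow> bool" where
  "separately_convex h \<longleftrightarrow>
     (\<forall>y. convex_on UNIV (\<lambda>x. h x y)) \<and> (\<forall>x. convex_on UNIV (\<lambda>y. h x y))"

definition omega :: "(real \<Rightarrow> real) \<Rightarrow> real \<Rightarrow> real \<Rightarrow> real" where
  "omega g x t = g (x + t) + g (x - t) - 2 * g x"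

end

theory Submission
  imports Defs
begin

(* Fix x and write E(s) = h(x+s, x-s) + h(x-s, x+s) - 2 h(x, x) and phi(t) = omega_g(x,t) / t^2.
   Convexity of h on axis-parallel segments through (x +- s, x -+ s) and (x +- s, x -+ t), whose
   endpoints lie on the diagonal or on the lines x +- t, gives for 0 < s < t the discrete inequality
   E(s)/s - E(t)/t <= (t - s) max (phi s) (phi t); summing it over fine partitions and using
   uniform continuity of phi yields E(v)/v - E(u)/u <= int_v^u phi. The same convexity on the
   square of size v gives E(v) >= -omega_g(x,v). Hence I(v) = int_v^u phi satisfies
   -E(u)/u <= psi(v) + I(v) with psi(v) = omega_g(x,v)/v, while I' = -psi/v. If I stayed below
   -E(u)/u - e near 0, then psi > e there and I would grow like e log(1/v), which is absurd;
   so liminf I >= -E(u)/u. The uniform bound at u = 1 follows because a separately convex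
   function is bounded above on squares and g is bounded below on compact intervals. *)

lemma convex_on_three_points:
  fixes f :: "real \<Rightarrow> real"
  assumes "convex_on S f" "a \<in> S" "c \<in> S" "a < b" "b < c"
  shows "(c - a) * f b \<le> (c - b) * f a + (b - a) * f c"
proof -
  define t where "t = (b - a) / (c - a)"
  have t: "0 \<le> t" "t \<le> 1" "t * (c - a) = b - a" using assms(4,5) by (auto simp: t_def field_simps)
  have "f b \<le> (1 - t) * f a + t * f c"
    using convex_onD[OF assms(1) t(1,2) assms(2,3)] t(3) by (simp add: algebra_simps)
  then have "(c - a) * f b \<le> (c - a) * ((1 - t) * f a + t * f c)"
    using assms(4,5) by (intro mult_left_mono) auto
  also have "\<dots> = ((c - a) - t * (c - a)) * f a + (t * (c - a)) * f c"
    by (simp add: algebra_simps)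
  also have "\<dots> = (c - b) * f a + (b - a) * f c"
    by (simp add: t(3))
  finally show ?thesis .
qed

lemma locally_lipschitz_real_imp_continuous_on:
  assumes "locally_lipschitz_real g"
  shows "continuous_on UNIV g"
proof -
  have "isCont g x" for x
  proof -
    obtain e L where "e > 0" and L: "\<forall>y\<in>ball x e. \<forall>z\<in>ball x e. \<bar>g y - g z\<bar> \<le> L * \<bar>y - z\<bar>"
      using assms unfolding locally_lipschitz_real_def by blast
    have "(max L 0)-lipschitz_on (ball x e) g"
    proof (rule lipschitz_onI)
      fix y z assume "y \<in> ball x e" "z \<in> ball x e"
      then have "\<bar>g y - g z\<bar> \<le> L * \<bar>y - z\<bar>" using L by blast
      also have "\<dots> \<le> max L 0 * \<bar>y - z\<bar>" by (intro mult_right_mono) auto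
      finally show "dist (g y) (g z) \<le> max L 0 * dist y z" by (simp add: dist_real_def)
    qed simp
    then have "continuous_on (ball x e) g" by (rule lipschitz_on_continuous_on)
    then show ?thesis using \<open>e > 0\<close> by (simp add: continuous_on_eq_continuous_at)
  qed
  then show ?thesis by (simp add: continuous_at_imp_continuous_on)
qed

definition cross_diff :: "(real \<Rightarrow> real \<Rightarrow> real) \<Rightarrow> real \<Rightarrow> real \<Rightarrow> real" where
  "cross_diff h x \<tau> = h (x + \<tau>) (x - \<tau>) + h (x - \<tau>) (x + \<tau>) - 2 * h x x"

lemma separately_convexD:
  assumes "separately_convex h"
  shows "convex_on UNIV (\<lambda>a. h a b)" "convex_on UNIV (\<lambda>b. h a b)"
  using assms by (simp_all add: separately_convex_def)

lemma cross_diff_ge_neg_omega: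
  assumes "separately_convex h" "0 < v"
  shows "- omega (\<lambda>t. h t t) x v \<le> cross_diff h x v"
proof -
  note three = convex_on_three_points[of UNIV, simplified]
  have "(2 * v) * h x (x-v) \<le> v * h (x-v) (x-v) + v * h (x+v) (x-v)"
    using three[OF separately_convexD(1)[OF assms(1)], of "x-v" x "x+v"] assms(2)
    by (simp add: algebra_simps)
  moreover have "(2 * v) * h x (x+v) \<le> v * h (x-v) (x+v) + v * h (x+v) (x+v)"
    using three[OF separately_convexD(1)[OF assms(1)], of "x-v" x "x+v"] assms(2)
    by (simp add: algebra_simps)
  moreover have "(2 * v) * h x x \<le> v * h x (x-v) + v * h x (x+v)"
    using three[OF separately_convexD(2)[OF assms(1)], of "x-v" x "x+v"] assms(2)
    by (simp add: algebra_simps)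
  ultimately have "0 \<le> v * (cross_diff h x v + omega (\<lambda>t. h t t) x v)"
    unfolding cross_diff_def omega_def by (simp add: algebra_simps)
  then show ?thesis using assms(2) by (simp add: zero_le_mult_iff)
qed

lemma cross_diff_two_scales:
  assumes "separately_convex h" "0 < s" "s < t"
  shows "t * (t + s) * cross_diff h x s
     \<le> s * (t + s) * cross_diff h x t
        + s * (t - s) * omega (\<lambda>\<tau>. h \<tau> \<tau>) x t + t * (t - s) * omega (\<lambda>\<tau>. h \<tau> \<tau>) x s"
proof -
  note three = convex_on_three_points[of UNIV, simplified]
  note c1 = separately_convexD(1)[OF assms(1)] and c2 = separately_convexD(2)[OF assms(1)]
  have "s * ((2 * t) * h (x+s) (x-t)) \<le> s * ((t-s) * h (x-t) (x-t) + (t+s) * h (x+t) (x-t))"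
    using three[OF c1, of "x-t" "x+s" "x+t"] assms(2,3)
    by (intro mult_left_mono) (simp_all add: algebra_simps)
  moreover have "t * ((t+s) * h (x+s) (x-s)) \<le> t * ((2 * s) * h (x+s) (x-t) + (t-s) * h (x+s) (x+s))"
    using three[OF c2, of "x-t" "x-s" "x+s"] assms(2,3)
    by (intro mult_left_mono) (simp_all add: algebra_simps)
  moreover have "s * ((2 * t) * h (x-s) (x+t)) \<le> s * ((t+s) * h (x-t) (x+t) + (t-s) * h (x+t) (x+t))"
    using three[OF c1, of "x-t" "x-s" "x+t"] assms(2,3)
    by (intro mult_left_mono) (simp_all add: algebra_simps)
  moreover have "t * ((t+s) * h (x-s) (x+s)) \<le> t * ((t-s) * h (x-s) (x-s) + (2 * s) * h (x-s) (x+t))"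
    using three[OF c2, of "x-s" "x+s" "x+t"] assms(2,3)
    by (intro mult_left_mono) (simp_all add: algebra_simps)
  ultimately show ?thesis
    unfolding cross_diff_def omega_def by (simp add: algebra_simps)
qed

lemma cross_diff_quotient_step:
  fixes x :: real
  assumes "separately_convex h" "0 < s" "s < t"
  defines "\<phi> \<equiv> \<lambda>\<tau>. omega (\<lambda>\<tau>. h \<tau> \<tau>) x \<tau> / \<tau>\<^sup>2"
  shows "cross_diff h x s / s - cross_diff h x t / t \<le> (t - s) * max (\<phi> s) (\<phi> t)"
proof -
  define w where "w = omega (\<lambda>\<tau>. h \<tau> \<tau>) x"
  define M where "M = max (\<phi> s) (\<phi> t)"
  define K where "K = s * t * (t + s)"
  have "K > 0" using assms(2,3) by (simp add: K_def)
  have nz: "s \<noteq> 0" "t \<noteq> 0" "t + s \<noteq> 0" using assms(2,3) by auto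
  have "t * \<phi> t + s * \<phi> s \<le> (t + s) * M"
    using assms(2,3) by (auto simp: M_def distrib_right intro!: add_mono mult_left_mono)
  have "K * (cross_diff h x s / s - cross_diff h x t / t)
      = t * (t + s) * cross_diff h x s - s * (t + s) * cross_diff h x t"
    using nz by (simp add: K_def field_simps)
  also have "\<dots> \<le> (t - s) * (s * w t + t * w s)"
    using cross_diff_two_scales[OF assms(1-3), of x] by (simp add: w_def algebra_simps)
  also have "\<dots> = (t - s) * (s * t * (t * \<phi> t + s * \<phi> s))"
    using nz by (simp add: \<phi>_def w_def field_simps power2_eq_square)
  also have "\<dots> \<le> (t - s) * (s * t * ((t + s) * M))"
    using assms(2,3) \<open>t * \<phi> t + s * \<phi> s \<le> (t + s) * M\<close> by (intro mult_left_mono) auto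
  also have "\<dots> = K * ((t - s) * M)"
    by (simp add: K_def)
  finally show ?thesis
    using \<open>K > 0\<close> by (simp add: M_def)
qed

lemma le_of_local_mono:
  fixes F :: "real \<Rightarrow> 'a::order"
  assumes "d > 0" "v \<le> u"
    and local: "\<And>s t. v \<le> s \<Longrightarrow> s \<le> t \<Longrightarrow> t \<le> u \<Longrightarrow> t - s < d \<Longrightarrow> F s \<le> F t"
  shows "F v \<le> F u"
proof -
  have "\<forall>s. v \<le> s \<and> s \<le> u \<and> u - s \<le> real n * (d / 2) \<longrightarrow> F s \<le> F u" for n
  proof (induction n)
    case 0
    then show ?case by auto
  next
    case (Suc n)
    show ?case
    proof (intro allI impI)
      fix s assume s: "v \<le> s \<and> s \<le> u \<and> u - s \<le> real (Suc n) * (d / 2)"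
      show "F s \<le> F u"
      proof (cases "u - s < d")
        case True
        then show ?thesis using local s by auto
      next
        case False
        then have "F (s + d / 2) \<le> F u"
          using Suc.IH s assms(1) by (auto simp: algebra_simps)
        moreover have "F s \<le> F (s + d / 2)"
          using local[of s "s + d / 2"] s False assms(1) by auto
        ultimately show ?thesis by simp
      qed
    qed
  qed
  moreover obtain n where "(u - v) / (d / 2) \<le> real n" using real_arch_simple by blast
  then have "u - v \<le> real n * (d / 2)" using assms(1) by (simp add: field_simps)
  ultimately show ?thesis using assms(2) by auto
qed

lemma diff_le_integral_of_max_steps:
  fixes A \<phi> :: "real \<Rightarrow> real"
  assumes cont: "continuous_on {v..u} \<phi>" and "v \<le> u"
    and step: "\<And>s t. v \<le> s \<Longrightarrow> s < t \<Longrightarrow> t \<le> u \<Longrightarrow> A s - A t \<le> (t - s) * max (\<phi> s) (\<phi> t)"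
  shows "A v - A u \<le> integral {v..u} \<phi>"
proof (rule field_le_epsilon)
  fix \<epsilon> :: real assume "\<epsilon> > 0"
  define e where "e = \<epsilon> / (u - v + 1)"
  have "e > 0" using \<open>\<epsilon> > 0\<close> \<open>v \<le> u\<close> by (simp add: e_def)
  have int: "\<phi> integrable_on {a..b}" if "v \<le> a" "b \<le> u" for a b
    by (rule integrable_continuous_interval, rule continuous_on_subset[OF cont]) (use that in auto)
  obtain \<delta> where "\<delta> > 0"
    and uc: "\<forall>a\<in>{v..u}. \<forall>b\<in>{v..u}. dist b a < \<delta> \<longrightarrow> dist (\<phi> b) (\<phi> a) < e"
    using compact_uniformly_continuous[OF cont compact_Icc] \<open>e > 0\<close>
    unfolding uniformly_continuous_on_def by metis
  define F where "F \<tau> = A \<tau> - integral {\<tau>..u} \<phi> + e * \<tau>" for \<tau>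
  have "F v \<le> F u"
  proof (rule le_of_local_mono[OF \<open>\<delta> > 0\<close> \<open>v \<le> u\<close>])
    fix s t assume st: "v \<le> s" "s \<le> t" "t \<le> u" "t - s < \<delta>"
    show "F s \<le> F t"
    proof (cases "s = t")
      case False
      then have "s < t" using st by simp
      have "integral {s..t} (\<lambda>_. max (\<phi> s) (\<phi> t) - e) \<le> integral {s..t} \<phi>"
      proof (rule integral_le)
        fix \<tau> assume "\<tau> \<in> {s..t}"
        then have "dist (\<phi> \<tau>) (\<phi> s) < e" "dist (\<phi> \<tau>) (\<phi> t) < e"
          using uc st by (auto simp: dist_real_def)
        then show "max (\<phi> s) (\<phi> t) - e \<le> \<phi> \<tau>" by (auto simp: dist_real_def)
      qed (use int st in auto)
      moreover have "integral {s..u} \<phi> = integral {s..t} \<phi> + integral {t..u} \<phi>"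
        using Henstock_Kurzweil_Integration.integral_combine[OF st(2,3) int[OF st(1) order_refl]] by simp
      moreover have "A s - A t \<le> (t - s) * max (\<phi> s) (\<phi> t)" by (rule step) (use st \<open>s < t\<close> in auto)
      ultimately show ?thesis
        using \<open>s < t\<close> by (simp add: F_def algebra_simps)
    qed simp
  qed
  then have "A v - A u \<le> integral {v..u} \<phi> + e * (u - v)"
    by (simp add: F_def algebra_simps)
  also have "e * (u - v) \<le> \<epsilon>"
    using \<open>\<epsilon> > 0\<close> \<open>v \<le> u\<close> by (simp add: e_def field_simps)
  finally show "A v - A u \<le> integral {v..u} \<phi> + \<epsilon>" by simp
qed

lemma continuous_on_omega_quotient:
  assumes "continuous_on UNIV g" "0 \<notin> S"
  shows "continuous_on S (\<lambda>t. omega g x t / t\<^sup>2)"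
proof -
  have "continuous_on S (\<lambda>t. g (x + t))" "continuous_on S (\<lambda>t. g (x - t))"
    by (auto intro!: continuous_on_compose2[OF assms(1)] continuous_intros)
  then show ?thesis
    using assms(2) unfolding omega_def by (auto intro!: continuous_intros)
qed

lemma cross_diff_quotient_le_integral:
  fixes x :: real
  assumes "separately_convex h" "continuous_on UNIV (\<lambda>t. h t t)" "0 < v" "v \<le> u"
  shows "cross_diff h x v / v - cross_diff h x u / u
    \<le> integral {v..u} (\<lambda>t. omega (\<lambda>t. h t t) x t / t\<^sup>2)"
proof (rule diff_le_integral_of_max_steps)
  show "continuous_on {v..u} (\<lambda>t. omega (\<lambda>t. h t t) x t / t\<^sup>2)"
    using assms(3) by (intro continuous_on_omega_quotient[OF assms(2)]) auto
qed (use assms cross_diff_quotient_step[OF assms(1)] in auto)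

lemma ge_level_if_decreasing_below:
  fixes I :: "real \<Rightarrow> real"
  assumes "w \<le> b" "continuous_on {w..b} I" "m \<le> I b"
    and dec: "\<And>y. w \<le> y \<Longrightarrow> y < b \<Longrightarrow> I y < m \<Longrightarrow> \<exists>l<0. (I has_real_derivative l) (at y)"
  shows "m \<le> I w"
proof (rule ccontr)
  assume "\<not> m \<le> I w"
  obtain t0 where t0: "t0 \<in> {w..b}" and min: "\<And>y. y \<in> {w..b} \<Longrightarrow> I t0 \<le> I y"
    using continuous_attains_inf[OF compact_Icc _ assms(2)] assms(1) by auto
  have "I t0 < m" using min[of w] \<open>\<not> m \<le> I w\<close> assms(1) by auto
  then have "t0 < b" using t0 assms(3) by (cases "t0 = b") auto
  then obtain l where "l < 0" "(I has_real_derivative l) (at t0)"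
    using dec t0 \<open>I t0 < m\<close> by auto
  then obtain d where "d > 0" and right: "\<And>h. h > 0 \<Longrightarrow> h < d \<Longrightarrow> I (t0 + h) < I t0"
    using DERIV_neg_dec_right by blast
  define \<delta> where "\<delta> = min d (b - t0) / 2"
  have "\<delta> > 0" "\<delta> < d" "t0 + \<delta> \<in> {w..b}"
    using \<open>d > 0\<close> \<open>t0 < b\<close> t0 by (auto simp: \<delta>_def min_def field_simps)
  then show False using right min by fastforce
qed

lemma exists_ge_level_near_0:
  fixes I \<psi> :: "real \<Rightarrow> real"
  assumes "u > 0" "\<epsilon> > 0"
    and der: "\<And>v. 0 < v \<Longrightarrow> v < u \<Longrightarrow> (I has_real_derivative - (\<psi> v / v)) (at v)"
    and bd: "\<And>v. 0 < v \<Longrightarrow> v < u \<Longrightarrow> c \<le> \<psi> v + I v"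
  shows "\<exists>v. 0 < v \<and> v < u \<and> c - \<epsilon> \<le> I v"
proof (rule ccontr)
  assume "\<not> ?thesis"
  then have below: "\<And>v. 0 < v \<Longrightarrow> v < u \<Longrightarrow> I v < c - \<epsilon>" by force
  define v0 where "v0 = u / 2"
  define w where "w = v0 * exp (- (\<bar>c - I v0\<bar> + 1) / \<epsilon>)"
  have "0 < v0" "v0 < u" using assms(1) by (auto simp: v0_def)
  have "0 < w" using \<open>0 < v0\<close> by (simp add: w_def)
  have "exp (- (\<bar>c - I v0\<bar> + 1) / \<epsilon>) < 1" using assms(2) by (simp add: divide_neg_pos add_pos_nonneg)
  then have "w < v0" using \<open>0 < v0\<close> by (simp add: w_def)
  have "I v0 + \<epsilon> * ln v0 < I w + \<epsilon> * ln w"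
  proof (rule DERIV_neg_imp_decreasing[OF \<open>w < v0\<close>])
    fix y assume "w \<le> y" "y \<le> v0"
    then have y: "0 < y" "y < u" using \<open>0 < w\<close> \<open>v0 < u\<close> by auto
    have "\<psi> y > \<epsilon>" using bd[OF y] below[OF y] by simp
    then have "- (\<psi> y / y) + \<epsilon> * (1 / y) < 0" using y by (simp add: field_simps)
    moreover have "((\<lambda>y. I y + \<epsilon> * ln y) has_real_derivative - (\<psi> y / y) + \<epsilon> * (1 / y)) (at y)"
      using y by (auto intro!: derivative_eq_intros der)
    ultimately show "\<exists>l. ((\<lambda>y. I y + \<epsilon> * ln y) has_real_derivative l) (at y) \<and> l < 0" by blast
  qed
  also have "\<epsilon> * ln w = \<epsilon> * ln v0 - (\<bar>c - I v0\<bar> + 1)"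
    using assms(2) \<open>0 < v0\<close> by (simp add: w_def ln_mult field_simps)
  finally have "I w > c - \<epsilon>" using assms(2) by auto
  with below[of w] \<open>0 < w\<close> \<open>w < v0\<close> \<open>v0 < u\<close> show False by simp
qed

lemma Liminf_at_right_0_ge:
  fixes I \<psi> :: "real \<Rightarrow> real"
  assumes "u > 0"
    and der: "\<And>v. 0 < v \<Longrightarrow> v < u \<Longrightarrow> (I has_real_derivative - (\<psi> v / v)) (at v)"
    and bd: "\<And>v. 0 < v \<Longrightarrow> v < u \<Longrightarrow> c \<le> \<psi> v + I v"
  shows "ereal c \<le> Liminf (at_right 0) (\<lambda>v. ereal (I v))"
proof (rule ereal_le_epsilon2)
  fix \<epsilon> :: real assume "\<epsilon> > 0"
  obtain v1 where v1: "0 < v1" "v1 < u" "c - \<epsilon> \<le> I v1"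
    using exists_ge_level_near_0[OF assms(1) \<open>\<epsilon> > 0\<close> der bd] by blast
  have "c - \<epsilon> \<le> I w" if "0 < w" "w < v1" for w
  proof (rule ge_level_if_decreasing_below[of w v1])
    show "continuous_on {w..v1} I"
      using that v1 by (intro continuous_at_imp_continuous_on ballI DERIV_isCont[OF der]) auto
    fix y assume y: "w \<le> y" "y < v1" "I y < c - \<epsilon>"
    then have "0 < y" "y < u" using that v1 by auto
    then have "- (\<psi> y / y) < 0" using bd[of y] y(3) \<open>\<epsilon> > 0\<close> by simp
    then show "\<exists>l<0. (I has_real_derivative l) (at y)" using der \<open>0 < y\<close> \<open>y < u\<close> by blast
  qed (use that v1 in auto)
  then have "ereal (c - \<epsilon>) \<le> Liminf (at_right 0) (\<lambda>v. ereal (I v))"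
    by (intro Liminf_bounded eventually_mono[OF eventually_at_right_real[OF v1(1)]]) auto
  then show "ereal c \<le> Liminf (at_right 0) (\<lambda>v. ereal (I v)) + ereal \<epsilon>"
    by (cases "Liminf (at_right 0) (\<lambda>v. ereal (I v))") auto
qed

lemma cross_diff_ge_Liminf:
  fixes x u :: real
  assumes sc: "separately_convex h" and cont: "continuous_on UNIV (\<lambda>t. h t t)" and "u > 0"
  shows "- ereal u * Liminf (at_right 0)
             (\<lambda>v. ereal (integral {v..u} (\<lambda>t. omega (\<lambda>t. h t t) x t / t\<^sup>2)))
           \<le> ereal (cross_diff h x u)"
proof -
  define \<phi> where "\<phi> = (\<lambda>t. omega (\<lambda>t. h t t) x t / t\<^sup>2)"
  define I where "I v = integral {v..u} \<phi>" for v
  define c where "c = - (cross_diff h x u / u)"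
  have "ereal c \<le> Liminf (at_right 0) (\<lambda>v. ereal (I v))"
  proof (rule Liminf_at_right_0_ge[OF \<open>u > 0\<close>, where \<psi> = "\<lambda>v. omega (\<lambda>t. h t t) x v / v"])
    fix v assume v: "0 < v" "v < u"
    have "- omega (\<lambda>t. h t t) x v / v \<le> cross_diff h x v / v"
      using cross_diff_ge_neg_omega[OF sc v(1)] v(1) by (intro divide_right_mono) auto
    then show "c \<le> omega (\<lambda>t. h t t) x v / v + I v"
      using cross_diff_quotient_le_integral[OF sc cont v(1), of u x] v
      by (simp add: c_def I_def \<phi>_def)
    have "continuous_on {v/2..u} \<phi>"
      unfolding \<phi>_def using v by (intro continuous_on_omega_quotient[OF cont]) auto
    then have "(I has_real_derivative - \<phi> v) (at v within {v/2..u})"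
      unfolding I_def using v by (intro integral_has_real_derivative') auto
    moreover have "at v within {v/2..u} = at v"
      using v by (intro at_within_interior) auto
    ultimately show "(I has_real_derivative - (omega (\<lambda>t. h t t) x v / v / v)) (at v)"
      by (simp add: \<phi>_def power2_eq_square)
  qed
  then show ?thesis
  proof (cases "Liminf (at_right 0) (\<lambda>v. ereal (I v))")
    case (real l)
    then have "- u * l \<le> - u * c" using \<open>ereal c \<le> _\<close> \<open>u > 0\<close> by (intro mult_left_mono_neg) auto
    then show ?thesis using real \<open>u > 0\<close> by (simp add: c_def I_def \<phi>_def)
  qed (use \<open>u > 0\<close> in \<open>simp_all add: I_def \<phi>_def\<close>)
qed

lemma separately_convex_bounded_above_Icc:
  assumes "separately_convex h"
  shows "\<exists>M. \<forall>a\<in>{p..q}. \<forall>b\<in>{p..q}. h a b \<le> M"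
proof (intro exI ballI)
  fix a b assume ab: "a \<in> {p..q}" "b \<in> {p..q}"
  have "convex_on {p..q} (\<lambda>a. h a b)" "convex_on {p..q} (\<lambda>b. h a b)" for a b
    using separately_convexD[OF assms] by (auto intro: convex_on_subset)
  then have "h a b \<le> max (h p b) (h q b)" "h p b \<le> max (h p p) (h p q)" "h q b \<le> max (h q p) (h q q)"
    using ab by (auto intro: convex_on_le_max)
  then show "h a b \<le> max (max (h p p) (h p q)) (max (h q p) (h q q))"
    by linarith
qed

lemma neg_Liminf_bounded_on_bounded:
  assumes sc: "separately_convex h" and cont: "continuous_on UNIV (\<lambda>t. h t t)" and "bounded S"
  shows "\<exists>C. \<forall>x\<in>S. - Liminf (at_right 0)
              (\<lambda>b. ereal (integral {b..1} (\<lambda>t. omega (\<lambda>t. h t t) x t / t\<^sup>2))) < ereal C"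
proof -
  obtain R where R: "\<And>x. x \<in> S \<Longrightarrow> \<bar>x\<bar> \<le> R" using \<open>bounded S\<close> by (auto simp: bounded_real)
  obtain M where M: "\<And>a b. a \<in> {-R-1..R+1} \<Longrightarrow> b \<in> {-R-1..R+1} \<Longrightarrow> h a b \<le> M"
    using separately_convex_bounded_above_Icc[OF sc] by blast
  have "bounded ((\<lambda>t. h t t) ` {-R..R})"
    by (intro compact_imp_bounded compact_continuous_image continuous_on_subset[OF cont]) auto
  then obtain B where B: "\<And>t. t \<in> {-R..R} \<Longrightarrow> \<bar>h t t\<bar> \<le> B" by (force simp: bounded_real)
  show ?thesis
  proof (intro exI ballI)
    fix x assume "x \<in> S"
    then have "\<bar>x\<bar> \<le> R" by (rule R)
    then have "h (x + 1) (x - 1) \<le> M" "h (x - 1) (x + 1) \<le> M" "\<bar>h x x\<bar> \<le> B"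
      by (auto intro!: M B)
    then have "cross_diff h x 1 < 2 * M + 2 * B + 1" by (simp add: cross_diff_def)
    moreover have "- Liminf (at_right 0) (\<lambda>b. ereal (integral {b..1} (\<lambda>t. omega (\<lambda>t. h t t) x t / t\<^sup>2)))
        \<le> ereal (cross_diff h x 1)"
      using cross_diff_ge_Liminf[OF sc cont, of 1 x] by (simp add: one_ereal_def[symmetric])
    ultimately show "- Liminf (at_right 0) (\<lambda>b. ereal (integral {b..1} (\<lambda>t. omega (\<lambda>t. h t t) x t / t\<^sup>2)))
        < ereal (2 * M + 2 * B + 1)"
      by (simp add: le_less_trans)
  qed
qed

theorem proposition4p1:
  fixes g :: "real \<Rightarrow> real" and h :: "real \<Rightarrow> real \<Rightarrow> real"
  assumes "locally_lipschitz_real g"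
    and "separately_convex h"
    and "\<forall>t. g t = h t t"
  shows "(\<forall>x u. u > 0 \<longrightarrow>
            ereal (h (x + u) (x - u) + h (x - u) (x + u) - 2 * h x x)
              \<ge> - ereal u * Liminf (at_right 0)
                   (\<lambda>v. ereal (integral {v..u} (\<lambda>t. omega g x t / t\<^sup>2))))
       \<and> (\<forall>I::real set. is_interval I \<and> bounded I \<longrightarrow>
            (\<exists>C::real. \<forall>x\<in>I.
               - Liminf (at_right 0) (\<lambda>b. ereal (integral {b..1} (\<lambda>t. omega g x t / t\<^sup>2)))
                 < ereal C))"
proof -
  have g: "g = (\<lambda>t. h t t)" using assms(3) by auto
  have cont: "continuous_on UNIV (\<lambda>t. h t t)"
    using locally_lipschitz_real_imp_continuous_on[OF assms(1)] by (simp add: g)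
  show ?thesis
    using cross_diff_ge_Liminf[OF assms(2) cont] neg_Liminf_bounded_on_bounded[OF assms(2) cont]
    unfolding g by (auto simp: cross_diff_def)
qed

end
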